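(* Let $n>k\geq3$ be odd integers, $A$ a cyclically $k$-diagonal $n\times n$ array, $g=\gcd(n,k-1)$, $m=n/g$, $\ell=(k-1)/g$, and $I_j=[1+(j-1)g,jg]$ for $j\in[1,m]$. Suppose there exists $E\subseteq[1,n]$ with $|E|=\frac{k-1}{2}+\frac{g-1}{2}$ such that there exist an integer $i\in[1,\ell-1]$, indices $j_1<j_2<\dots<j_{i+1}$ in $[1,m]$ with $j_{s+1}-j_s\equiv-\ell\pmod m$ for $s\in[1,i]$, and $f\in[1,g-1]$, with $E=\big(I_{j_1}\cup\dots\cup I_{j_{i+1}}\big)\setminus[j_{i+1}g-f+1,j_{i+1}g]$. Then there exists a solution to $P(A)$.
   Context: Arrays are partially filled and toroidal; $F(A)$ is the set of filled cells. $s_R(i,j)=(i,j+t)$, $s_C(i,j)=(i+t,j)$ with $t\ge1$ minimal such that the cell is filled. For $R,C\in\{-1,1\}^n$, $CN_{RC}(i,j)=s_C^{c_{j'}}(i,j')$ where $(i,j')=s_R^{r_i}(i,j)$. A solution to $P(A)$ is a pair $R,C$ such that $CN_{RC}$ is a permutation of $F(A)$ forming a single cycle of length $|F(A)|$. An $n\times n$ array is cyclically $k$-diagonal if its filled cells are exactly the $(i,j)$ with $i-j\bmod n\in\{0,\dots,k-1\}$. *)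

theory Defs
  imports Main
begin

text \<open>Cells of an n x n toroidal array are pairs (i,j) of integers with 1 <= i,j <= n.
  A partially filled array is represented by its set of filled cells F(A).\<close>

definition wrap :: "int \<Rightarrow> int \<Rightarrow> int" where
  "wrap n x = (x - 1) mod n + 1"

text \<open>s_R^d for d in {-1,1}: move along the row in direction d to the next filled cell
  (t >= 1 minimal). d = 1 gives s_R, d = -1 gives its inverse.\<close>
definition row_step :: "int \<Rightarrow> (int \<times> int) set \<Rightarrow> int \<Rightarrow> int \<times> int \<Rightarrow> int \<times> int" where
  "row_step n F d c =
     (let i = fst c; j = snd c;
          t = (LEAST t::nat. t \<ge> 1 \<and> (i, wrap n (j + d * int t)) \<in> F)
      in (i, wrap n (j + d * int t)))"

definition col_step :: "int \<Rightarrow> (int \<times> int) set \<Rightarrow> int \<Rightarrow> int \<times> int \<Rightarrow> int \<times> int" where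
  "col_step n F d c =
     (let i = fst c; j = snd c;
          t = (LEAST t::nat. t \<ge> 1 \<and> (wrap n (i + d * int t), j) \<in> F)
      in (wrap n (i + d * int t), j))"

definition CN :: "int \<Rightarrow> (int \<times> int) set \<Rightarrow> (int \<Rightarrow> int) \<Rightarrow> (int \<Rightarrow> int) \<Rightarrow> int \<times> int \<Rightarrow> int \<times> int" where
  "CN n F R C c =
     (let c' = row_step n F (R (fst c)) c in col_step n F (C (snd c')) c')"

definition is_solution :: "int \<Rightarrow> (int \<times> int) set \<Rightarrow> (int \<Rightarrow> int) \<Rightarrow> (int \<Rightarrow> int) \<Rightarrow> bool" where
  "is_solution n F R C \<longleftrightarrow>
     (\<forall>i\<in>{1..n}. R i \<in> {-1, 1}) \<and> (\<forall>j\<in>{1..n}. C j \<in> {-1, 1}) \<and>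
     bij_betw (CN n F R C) F F \<and>
     (\<exists>x\<in>F. {((CN n F R C) ^^ t) x | t. t < card F} = F)"

definition has_solution :: "int \<Rightarrow> (int \<times> int) set \<Rightarrow> bool" where
  "has_solution n F \<longleftrightarrow> (\<exists>R C. is_solution n F R C)"

definition cyc_diag :: "int \<Rightarrow> int \<Rightarrow> (int \<times> int) set" where
  "cyc_diag n k = {(i, j). i \<in> {1..n} \<and> j \<in> {1..n} \<and> (i - j) mod n \<in> {0..k-1}}"

end

theory Submission
  imports Defs "HOL-Combinatorics.Orbits"
begin

text \<open>
  Let \<open>g = gcd n (k - 1) = 2c + 1\<close>, \<open>m = n / g\<close>, \<open>\<ell> = (k - 1) / g = 2a\<close>, \<open>h = a g\<close> (so
  \<open>k = 2h + 1\<close>) and \<open>D = n - k + 1 = (m - 2a) g\<close>, the length of a jump over the empty cells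
  of a row or column. Order the diagonals \<open>0, 2, ..., k - 1, 1, 3, ..., k - 2\<close> as levels
  \<open>0, ..., 2h\<close>. Take \<open>C = (1, ..., 1)\<close> and \<open>R\<^sub>i = -1\<close> exactly for the rows \<open>i\<close> of \<open>E'\<close>,
  the union of the blocks of \<open>g\<close> rows starting at \<open>0, D, ..., (a - 1) D\<close> and of the \<open>c\<close>
  rows starting at \<open>a D\<close>. Then \<open>CN\<close> moves a cell of a row in \<open>E'\<close> one row down and one
  level up and a cell of any other row one row down on its level, except that the top level of
  a row in \<open>E'\<close> and level 0 of any other row jump \<open>D\<close> rows down to level 0.

  The hypothesis on \<open>E\<close> is only used to see that these blocks fit into one period,
  \<open>a D + g \<le> n\<close>. Since \<open>gcd m (2a) = 1\<close>, the multiples of \<open>D\<close> run through all multiples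
  of \<open>g\<close> modulo \<open>n\<close>, and following the moves block by block shows that every cell lies on
  the \<open>CN\<close>-orbit of the cell in row \<open>n\<close> on the main diagonal. As \<open>CN\<close> permutes \<open>F(A)\<close>,
  this orbit is a single cycle through all of \<open>F(A)\<close>.
\<close>

section \<open>Steps in a cyclically diagonal array\<close>

lemma wrap_in_range: "0 < n \<Longrightarrow> wrap n x \<in> {1..n}"
  unfolding wrap_def atLeastAtMost_iff
  using pos_mod_bound[of n "x - 1"] pos_mod_sign[of n "x - 1"] by linarith

lemma wrap_mod: "wrap n x mod n = x mod n"
  unfolding wrap_def by (simp add: mod_add_left_eq)

lemma wrap_cong: "x mod n = y mod n \<Longrightarrow> wrap n x = wrap n y"
  unfolding wrap_def by (metis mod_diff_left_eq)

lemma wrap_id: "x \<in> {1..n} \<Longrightarrow> wrap n x = x"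
  unfolding wrap_def by simp

lemma wrap_add_wrap: "wrap n (wrap n x + y) = wrap n (x + y)"
  by (rule wrap_cong) (metis mod_add_left_eq wrap_mod)

lemma wrap_mem_cyc_diag_iff:
  assumes "0 < n"
  shows "(wrap n u, wrap n v) \<in> cyc_diag n k \<longleftrightarrow> (u - v) mod n < k"
proof -
  have "(wrap n u - wrap n v) mod n = (u - v) mod n"
    by (metis mod_diff_eq wrap_mod)
  then show ?thesis
    using wrap_in_range[OF assms] assms by (auto simp: cyc_diag_def)
qed

lemma mod_add_in_range:
  "0 \<le> x mod n + c \<Longrightarrow> x mod n + c < n \<Longrightarrow> (x + c) mod n = x mod n + (c::int)"
  by (metis mod_add_left_eq mod_pos_pos_trivial)

lemma neg_mod_eq: "0 < t \<Longrightarrow> t < n \<Longrightarrow> (- t) mod n = n - (t::int)"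
  by (simp add: zmod_zminus1_eq_if)

lemma row_step_eqI:
  assumes "(i, wrap n (j + d * int t)) \<in> F" "1 \<le> t"
    and "\<And>t'. 1 \<le> t' \<Longrightarrow> t' < t \<Longrightarrow> (i, wrap n (j + d * int t')) \<notin> F"
  shows "row_step n F d (i, j) = (i, wrap n (j + d * int t))"
proof -
  have "(LEAST t. 1 \<le> t \<and> (i, wrap n (j + d * int t)) \<in> F) = t"
    by (rule Least_equality) (use assms not_le in auto)
  then show ?thesis unfolding row_step_def Let_def by simp
qed

lemma col_step_eqI:
  assumes "(wrap n (i + d * int t), j) \<in> F" "1 \<le> t"
    and "\<And>t'. 1 \<le> t' \<Longrightarrow> t' < t \<Longrightarrow> (wrap n (i + d * int t'), j) \<notin> F"
  shows "col_step n F d (i, j) = (wrap n (i + d * int t), j)"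
proof -
  have "(LEAST t. 1 \<le> t \<and> (wrap n (i + d * int t), j) \<in> F) = t"
    by (rule Least_equality) (use assms not_le in auto)
  then show ?thesis unfolding col_step_def Let_def by simp
qed

lemma row_step_cyc_diag:
  assumes "0 < n" "1 \<le> t" "(u - v - d * t) mod n < k"
    and "\<And>t'. 1 \<le> t' \<Longrightarrow> t' < t \<Longrightarrow> k \<le> (u - v - d * t') mod n"
  shows "row_step n (cyc_diag n k) d (wrap n u, wrap n v) = (wrap n u, wrap n (v + d * t))"
proof -
  have mem: "(wrap n u, wrap n (wrap n v + d * t')) \<in> cyc_diag n k \<longleftrightarrow> (u - v - d * t') mod n < k"
    for t'
    by (simp add: wrap_add_wrap wrap_mem_cyc_diag_iff[OF assms(1)] diff_diff_eq)
  have "row_step n (cyc_diag n k) d (wrap n u, wrap n v) =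
      (wrap n u, wrap n (wrap n v + d * int (nat t)))"
    by (rule row_step_eqI) (use assms mem in \<open>auto simp: not_less[symmetric]\<close>)
  then show ?thesis using assms(2) by (simp add: wrap_add_wrap)
qed

lemma col_step_cyc_diag:
  assumes "0 < n" "1 \<le> t" "(u - v + d * t) mod n < k"
    and "\<And>t'. 1 \<le> t' \<Longrightarrow> t' < t \<Longrightarrow> k \<le> (u - v + d * t') mod n"
  shows "col_step n (cyc_diag n k) d (wrap n u, wrap n v) = (wrap n (u + d * t), wrap n v)"
proof -
  have mem: "(wrap n (wrap n u + d * t'), wrap n v) \<in> cyc_diag n k \<longleftrightarrow> (u - v + d * t') mod n < k"
    for t'
    by (simp add: wrap_add_wrap wrap_mem_cyc_diag_iff[OF assms(1)] algebra_simps)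
  have "col_step n (cyc_diag n k) d (wrap n u, wrap n v) =
      (wrap n (wrap n u + d * int (nat t)), wrap n v)"
    by (rule col_step_eqI) (use assms mem in \<open>auto simp: not_less[symmetric]\<close>)
  then show ?thesis using assms(2) by (simp add: wrap_add_wrap)
qed

text \<open>
  \<open>(u - v) mod n\<close> is the diagonal of the cell \<open>(u, v)\<close>. Each row and each column meets the
  diagonals \<open>0, ..., k - 1\<close> in consecutive filled cells, so a step goes to the neighbouring
  cell, except at the two ends, where it jumps over the \<open>n - k\<close> empty cells.
\<close>

lemma row_step_right:
  assumes "0 < n" "0 < (u - v) mod n" "(u - v) mod n < k"
  shows "row_step n (cyc_diag n k) 1 (wrap n u, wrap n v) = (wrap n u, wrap n (v + 1))"
proof -
  have "(u - v - 1) mod n = (u - v) mod n - 1"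
    using mod_add_in_range[of "u - v" n "-1"] pos_mod_bound[OF assms(1), of "u - v"] assms(2)
    by simp
  then show ?thesis
    using row_step_cyc_diag[of n 1 u v 1 k] assms by simp
qed

lemma row_step_right_jump:
  assumes "(u - v) mod n = 0" "0 < k" "k < n"
  shows "row_step n (cyc_diag n k) 1 (wrap n u, wrap n v) = (wrap n u, wrap n (v + (n - k + 1)))"
proof -
  have shift: "(u - v - t) mod n = (- t) mod n" for t
    using assms(1) by (metis diff_0 mod_diff_left_eq)
  show ?thesis
  proof (rule row_step_cyc_diag[where d = 1, simplified])
    have "- (n - k + 1) = (k - 1) - n" by simp
    then have "(- (n - k + 1)) mod n = k - 1"
      using assms(2,3) by (simp only: minus_mod_self2) simp
    then show "(u - v - (n - k + 1)) mod n < k"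
      unfolding shift by simp
    show "k \<le> (u - v - t') mod n" if "1 \<le> t'" "t' < n - k + 1" for t'
      unfolding shift using that assms(2,3) by (simp add: neg_mod_eq)
  qed (use assms in auto)
qed

lemma row_step_left:
  assumes "0 < n" "k \<le> n" "(u - v) mod n < k - 1"
  shows "row_step n (cyc_diag n k) (-1) (wrap n u, wrap n v) = (wrap n u, wrap n (v - 1))"
proof -
  have "(u - v + 1) mod n = (u - v) mod n + 1"
    using mod_add_in_range[of "u - v" n 1] pos_mod_sign[OF assms(1), of "u - v"] assms(2,3) by simp
  then show ?thesis
    using row_step_cyc_diag[of n 1 u v "-1" k] assms by simp
qed

lemma mod_shift_last_diagonal:
  fixes n k u v t :: int
  assumes "(u - v) mod n = k - 1" "0 < k" "k < n"
  shows "(u - v + (n - k + 1)) mod n = 0"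
    and "1 \<le> t \<Longrightarrow> t < n - k + 1 \<Longrightarrow> (u - v + t) mod n = k - 1 + t"
proof -
  have shift: "(u - v + t) mod n = (k - 1 + t) mod n" for t
    using mod_add_left_eq[of "u - v" n t] assms(1) by simp
  have "k - 1 + (n - k + 1) = n" by simp
  then show "(u - v + (n - k + 1)) mod n = 0"
    unfolding shift by simp
  show "1 \<le> t \<Longrightarrow> t < n - k + 1 \<Longrightarrow> (u - v + t) mod n = k - 1 + t"
    unfolding shift using assms(2,3) by simp
qed

lemma row_step_left_jump:
  assumes "(u - v) mod n = k - 1" "0 < k" "k < n"
  shows "row_step n (cyc_diag n k) (-1) (wrap n u, wrap n v) = (wrap n u, wrap n (v - (n - k + 1)))"
proof (rule row_step_cyc_diag[where d = "-1", simplified])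
  show "(u - v + (n - k + 1)) mod n < k"
    using mod_shift_last_diagonal(1)[OF assms] assms(2) by simp
  show "k \<le> (u - v + t') mod n" if "1 \<le> t'" "t' < n - k + 1" for t'
    using mod_shift_last_diagonal(2)[OF assms that] that by simp
qed (use assms in auto)

lemma col_step_down:
  assumes "0 < n" "k \<le> n" "(u - v) mod n < k - 1"
  shows "col_step n (cyc_diag n k) 1 (wrap n u, wrap n v) = (wrap n (u + 1), wrap n v)"
proof -
  have "(u - v + 1) mod n = (u - v) mod n + 1"
    using mod_add_in_range[of "u - v" n 1] pos_mod_sign[OF assms(1), of "u - v"] assms(2,3) by simp
  then show ?thesis
    using col_step_cyc_diag[of n 1 u v 1 k] assms by simp
qed

lemma col_step_down_jump:
  assumes "(u - v) mod n = k - 1" "0 < k" "k < n"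
  shows "col_step n (cyc_diag n k) 1 (wrap n u, wrap n v) = (wrap n (u + (n - k + 1)), wrap n v)"
proof (rule col_step_cyc_diag[where d = 1, simplified])
  show "(u - v + (n - k + 1)) mod n < k"
    using mod_shift_last_diagonal(1)[OF assms] assms(2) by simp
  show "k \<le> (u - v + t') mod n" if "1 \<le> t'" "t' < n - k + 1" for t'
    using mod_shift_last_diagonal(2)[OF assms that] that by simp
qed (use assms in auto)

section \<open>Orbits of a bijection of a finite set\<close>

lemma self_in_orbit_bij_betw:
  assumes "bij_betw f S S" "finite S" "x \<in> S"
  shows "x \<in> orbit f x"
proof -
  let ?p = "perm_restrict f S"
  have "bij_betw ?p S S"
    using assms(1) by (rule bij_betw_cong[THEN iffD1, rotated]) (simp add: perm_restrict_def)
  then have "?p permutes S"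
    by (rule bij_imp_permutes) (simp add: perm_restrict_def)
  then have "x \<in> orbit ?p x"
    using assms(2) by (intro permutation_self_in_orbit) (auto simp: permutation_permutes)
  moreover have "orbit ?p x = orbit f x"
    by (rule orbit_cong0[OF assms(3)])
      (use \<open>bij_betw ?p S S\<close> in \<open>auto simp: bij_betw_def perm_restrict_def\<close>)
  ultimately show ?thesis by simp
qed

lemma funpow_return_bij_betw:
  assumes "bij_betw f S S" "finite S" "x \<in> S"
  obtains t' where "(f ^^ t') ((f ^^ t) x) = x"
proof -
  have self: "x \<in> orbit f x" by (rule self_in_orbit_bij_betw[OF assms])
  have "x \<in> orbit f ((f ^^ t) x)"
    using orbit_swap[OF self funpow_in_orbit[OF self]] by blast
  then obtain t' where "x = (f ^^ t') ((f ^^ t) x)"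
    by (auto simp: orbit_altdef)
  then show ?thesis by (rule that[OF sym])
qed

lemma single_cycle_bij_betw:
  assumes "bij_betw f S S" "finite S" "x \<in> S" "\<And>y. y \<in> S \<Longrightarrow> \<exists>t. (f ^^ t) x = y"
  shows "{(f ^^ t) x | t. t < card S} = S"
proof -
  have self: "x \<in> orbit f x" by (rule self_in_orbit_bij_betw[OF assms(1-3)])
  have "(f ^^ t) x \<in> S" for t
    using bij_betw_funpow[OF assms(1)] assms(3) by (auto simp: bij_betw_def)
  then have orbit: "orbit f x = S"
    using assms(4) by (auto simp: orbit_altdef_self_in[OF self])
  have "card S = funpow_dist1 f x x"
    using card_image[OF inj_on_funpow_dist1[OF self]]
    by (simp add: orbit_conv_funpow_dist1[OF self, symmetric] orbit)
  then have "S = (\<lambda>t. (f ^^ t) x) ` {..<card S}"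
    using orbit_conv_funpow_dist1[OF self] orbit by (simp add: atLeast0LessThan)
  then show ?thesis by blast
qed

section \<open>Arithmetic of the hypothesis\<close>

lemma card_blocks_minus_tail:
  fixes js :: "int \<Rightarrow> int" and g f N :: int
  assumes "1 \<le> f" "f \<le> g" "1 \<le> N"
  shows "int (card ((\<Union>s\<in>{1..N}. {1 + (js s - 1)*g .. js s*g}) - {js N*g - f + 1 .. js N*g}))
    \<le> N*g - f"
proof -
  define U where "U = (\<Union>s\<in>{1..N}. {1 + (js s - 1)*g .. js s*g})"
  define T where "T = {js N*g - f + 1 .. js N*g}"
  have "T \<subseteq> {1 + (js N - 1)*g .. js N*g}"
    unfolding T_def using assms by (auto simp: algebra_simps)
  then have "T \<subseteq> U"
    unfolding U_def using assms(3) by auto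
  have "card U \<le> (\<Sum>s\<in>{1..N}. card {1 + (js s - 1)*g .. js s*g})"
    unfolding U_def by (rule card_UN_le) simp
  also have "\<dots> = nat N * nat g"
    by (simp add: algebra_simps)
  finally have "int (card U) \<le> int (nat N * nat g)"
    by (simp only: of_nat_le_iff)
  also have "\<dots> = N*g"
    using assms by simp
  finally have "int (card U) \<le> N*g" .
  moreover have "finite U" "finite T"
    unfolding U_def T_def by auto
  with \<open>T \<subseteq> U\<close> have "card (U - T) = card U - card T" "card T \<le> card U"
    by (simp_all add: card_Diff_subset card_mono)
  moreover have "card T = nat f"
    unfolding T_def by simp
  ultimately show ?thesis
    unfolding U_def[symmetric] T_def[symmetric] using assms(1) by linarith
qed

lemma div2_le_of_mult_bound:
  fixes g l i f e :: int
  assumes "0 < g" "1 \<le> f" "0 \<le> e" "g * l div 2 + e \<le> (i + 1)*g - f"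
  shows "l div 2 \<le> i"
proof -
  have "2 * (l div 2) \<le> l"
    using div_mult_mod_eq[of l 2] pos_mod_sign[of 2 l] by linarith
  then have "g * (2 * (l div 2)) div 2 \<le> g * l div 2"
    using assms(1) by (intro zdiv_mono1 mult_left_mono) auto
  then have "g * (l div 2) < g * (i + 1)"
    using assms(2-4) by (simp add: algebra_simps)
  then show ?thesis
    using assms(1) by (simp add: mult_less_cancel_left)
qed

lemma arith_progression_int:
  fixes js :: "int \<Rightarrow> int"
  assumes "\<And>s. 1 \<le> s \<Longrightarrow> s \<le> i \<Longrightarrow> js (s + 1) = js s + d" "0 \<le> t" "t \<le> i"
  shows "js (1 + t) = js 1 + t*d"
  using assms(2,3)
proof (induction t rule: int_ge_induct)
  case (step t)
  then have "js (1 + t + 1) = js (1 + t) + d" using assms(1)[of "1 + t"] by simp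
  with step show ?case by (simp add: algebra_simps)
qed simp

lemma progression_mod_span:
  fixes js :: "int \<Rightarrow> int"
  assumes js: "\<forall>s \<in> {1..i + 1}. js s \<in> {1..m}" "\<forall>s \<in> {1..i}. js s < js (s + 1)"
      "\<forall>s \<in> {1..i}. (js (s + 1) - js s) mod m = (- l) mod m"
    and "0 < l" "l < m" "0 \<le> t" "t \<le> i"
  shows "t * (m - l) < m"
proof -
  have "js (s + 1) = js s + (m - l)" if "1 \<le> s" "s \<le> i" for s
  proof -
    have "js s \<in> {1..m}" "js (s + 1) \<in> {1..m}" "js s < js (s + 1)"
      "(js (s + 1) - js s) mod m = (- l) mod m"
      using js that by auto
    then show ?thesis
      using neg_mod_eq[of l m] assms(4,5) by simp
  qed
  then have "js (1 + t) = js 1 + t * (m - l)"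
    using assms(6,7) by (rule arith_progression_int)
  moreover have "1 + t \<in> {1..i + 1}" "1 \<in> {1..i + 1}"
    using assms(6,7) by simp_all
  then have "js (1 + t) \<le> m" "1 \<le> js 1"
    using js(1) by fastforce+
  ultimately show ?thesis
    by linarith
qed

locale cyc_diag_construction =
  fixes n k g c a m h D :: int
  assumes g_eq: "g = 2*c + 1" and c_pos: "1 \<le> c" and a_pos: "1 \<le> a"
    and h_eq: "h = a*g" and k_eq: "k = 2*h + 1" and n_eq: "n = g*m"
    and D_eq: "D = (m - 2*a)*g" and two_a_less_m: "2*a < m"
    and blocks_fit: "a*(m - 2*a) + 1 \<le> m" and coprime_m_2a: "coprime m (2*a)"
begin

lemma n_eq_D_plus_2h: "n = D + 2*h"
  unfolding n_eq D_eq h_eq by (simp add: algebra_simps)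

lemma two_c: "2*c = g - 1"
  using g_eq by simp

lemma a_times_g: "a*g = h" "g*a = h"
  using h_eq by simp_all

lemma g_ge_3: "3 \<le> g"
  using g_eq c_pos by simp

lemma c_less_g: "c < g"
  using g_eq c_pos by simp

lemma g_le_h: "g \<le> h"
  unfolding h_eq using a_pos g_ge_3 by simp

lemma g_le_D: "g \<le> D"
  unfolding D_eq using two_a_less_m g_ge_3 by simp

lemma blocks_fit_period: "a*D + g \<le> n"
proof -
  have "(a*(m - 2*a) + 1) * g \<le> m * g"
    using blocks_fit g_ge_3 by (intro mult_right_mono) auto
  then show ?thesis unfolding D_eq n_eq by (simp add: algebra_simps)
qed

lemma k_less_n: "k < n"
  using n_eq_D_plus_2h k_eq g_le_D g_ge_3 by simp

lemma n_pos: "0 < n"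
  using k_less_n k_eq g_le_h g_ge_3 by simp

lemma mult_D_mono: "s \<le> s' \<Longrightarrow> s*D \<le> s'*D"
  using g_le_D g_ge_3 by (intro mult_right_mono) auto

lemma mult_g_mono: "s \<le> s' \<Longrightarrow> s*g \<le> s'*g"
  using g_ge_3 by (intro mult_right_mono) auto

lemma jump_length_eq_D: "n - k + 1 = D"
  using n_eq_D_plus_2h k_eq by simp

lemma mod_minus_2h: "(x - 2*h) mod n = (x + D) mod n"
proof -
  have "x + D = (x - 2*h) + n" using n_eq_D_plus_2h by simp
  then show ?thesis by (simp only: mod_add_self2)
qed

text \<open>
  Rows are taken modulo \<open>n\<close>, row \<open>0\<close> being row \<open>n\<close>. Up to a rotation of the rows this is
  the set \<open>E\<close> of the statement, whose size forces \<open>i = a\<close> and \<open>f = c + 1\<close> there.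
\<close>

definition in_E :: "int \<Rightarrow> bool" where
  "in_E x \<longleftrightarrow> (\<exists>s. 0 \<le> s \<and> s < a \<and> s*D \<le> x mod n \<and> x mod n < s*D + g)
     \<or> (a*D \<le> x mod n \<and> x mod n < a*D + c)"

lemma in_E_cong: "x mod n = y mod n \<Longrightarrow> in_E x = in_E y"
  unfolding in_E_def by simp

lemma in_E_iff:
  "0 \<le> y \<Longrightarrow> y < n \<Longrightarrow> in_E y \<longleftrightarrow>
     (\<exists>s. 0 \<le> s \<and> s < a \<and> s*D \<le> y \<and> y < s*D + g) \<or> (a*D \<le> y \<and> y < a*D + c)"
  unfolding in_E_def by simp

lemma in_E_block: "0 \<le> s \<Longrightarrow> s < a \<Longrightarrow> 0 \<le> r \<Longrightarrow> r < g \<Longrightarrow> in_E (s*D + r)"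
proof -
  assume s: "0 \<le> s" "s < a" and r: "0 \<le> r" "r < g"
  have "0 \<le> s*D" "s*D + D \<le> a*D"
    using mult_D_mono[of 0 s] mult_D_mono[of "s + 1" a] s by (auto simp: algebra_simps)
  then have "0 \<le> s*D + r" "s*D + r < n"
    using blocks_fit_period g_le_D r by auto
  then show ?thesis using in_E_iff s r by auto
qed

lemma in_E_last_block: "0 \<le> r \<Longrightarrow> r < c \<Longrightarrow> in_E (a*D + r)"
proof -
  assume r: "0 \<le> r" "r < c"
  have "0 \<le> a*D" using mult_D_mono[of 0 a] a_pos by simp
  then have "0 \<le> a*D + r" "a*D + r < n" using blocks_fit_period r c_less_g by auto
  then show ?thesis using in_E_iff r by auto
qed

lemma not_in_E_gap: "0 \<le> s \<Longrightarrow> s < a \<Longrightarrow> s*D + g \<le> y \<Longrightarrow> y < (s + 1)*D \<Longrightarrow> \<not> in_E y"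
proof
  assume s: "0 \<le> s" "s < a" and y: "s*D + g \<le> y" "y < (s + 1)*D" and "in_E y"
  have "0 \<le> s*D" "(s + 1)*D \<le> a*D" using mult_D_mono[of 0 s] mult_D_mono[of "s + 1" a] s
    by auto
  then have "0 \<le> y" "y < n" using y blocks_fit_period g_ge_3 by auto
  then obtain s' where s': "0 \<le> s'" "s' < a" "s'*D \<le> y" "y < s'*D + g"
    using \<open>in_E y\<close> in_E_iff \<open>(s + 1)*D \<le> a*D\<close> y by auto
  show False
  proof (cases "s' \<le> s")
    case True then show False using mult_D_mono[OF True] y s' by auto
  next
    case False then show False using mult_D_mono[of "s + 1" s'] y s' by auto
  qed
qed

lemma not_in_E_tail: "a*D + c \<le> y \<Longrightarrow> y < n \<Longrightarrow> \<not> in_E y"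
proof
  assume y: "a*D + c \<le> y" "y < n" and "in_E y"
  have "0 \<le> a*D" using mult_D_mono[of 0 a] a_pos by simp
  then obtain s' where s': "0 \<le> s'" "s' < a" "y < s'*D + g"
    using \<open>in_E y\<close> in_E_iff[of y] y c_pos by auto
  have "s'*D + D \<le> a*D" using mult_D_mono[of "s' + 1" a] s' by (simp add: algebra_simps)
  then show False using s' y g_le_D c_pos by auto
qed

lemma coprime_m_minus_2a: "coprime (m - 2*a) m"
  using coprime_m_2a gcd_diff2[of m "2*a"] by (simp add: coprime_iff_gcd_eq_1 gcd.commute)

lemma not_in_E_far:
  assumes s: "a < s" "s < m" and r: "0 \<le> r" "r < g"
  shows "\<not> in_E (s*D + r)"
proof
  assume "in_E (s*D + r)"
  define y where "y = (s*D + r) mod n"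
  have "0 \<le> y" "y < n" "in_E y"
    using n_pos \<open>in_E (s*D + r)\<close> in_E_cong[of y "s*D + r"] unfolding y_def by auto
  then obtain s' r' where sr: "0 \<le> s'" "s' \<le> a" "0 \<le> r'" "r' < g" "y = s'*D + r'"
  proof (cases "a*D \<le> y \<and> y < a*D + c")
    case True
    then show ?thesis using that[of a "y - a*D"] a_pos c_less_g by auto
  next
    case False
    then obtain s' where "0 \<le> s'" "s' < a" "s'*D \<le> y" "y < s'*D + g"
      using in_E_iff \<open>0 \<le> y\<close> \<open>y < n\<close> \<open>in_E y\<close> by blast
    then show ?thesis using that[of s' "y - s'*D"] by auto
  qed
  define q where "q = (s*D + r) div n"
  have "s*D + r = n*q + y" unfolding q_def y_def by simp
  then have eq: "g * ((s - s')*(m - 2*a) - m*q) = r' - r"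
    using sr(5) unfolding D_eq n_eq by (simp add: algebra_simps)
  have "(s - s')*(m - 2*a) - m*q = 0"
  proof (rule ccontr)
    assume "(s - s')*(m - 2*a) - m*q \<noteq> 0"
    then have "g \<le> \<bar>g * ((s - s')*(m - 2*a) - m*q)\<bar>"
      using g_ge_3 by (simp add: abs_mult mult_le_cancel_left1 del: mult.commute)
    then show False using eq sr r by simp
  qed
  then have "m dvd (s - s')*(m - 2*a)" by (simp add: algebra_simps)
  then have "m dvd s - s'"
    using coprime_dvd_mult_left_iff[of m "m - 2*a" "s - s'"] coprime_m_minus_2a
    by (simp add: coprime_commute)
  moreover have "0 < s - s'" "s - s' < m" using s sr by auto
  ultimately show False using zdvd_imp_le by fastforce
qed

lemma residue_decomposition:
  obtains s r where "0 \<le> s" "s < m" "0 \<le> r" "r < g" "x mod n = (s*D + r) mod n"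
proof -
  obtain u v where uv: "u*m + v*(2*a) = 1"
    using coprime_m_2a bezout_int[of m "2*a"] by (auto simp: coprime_iff_gcd_eq_1)
  define r where "r = x mod g"
  define \<beta> where "\<beta> = x div g"
  define q where "q = (\<beta>*(-v)) div m"
  define s where "s = (\<beta>*(-v)) mod m"
  have s_eq: "s = \<beta>*(-v) - m*q"
    unfolding s_def q_def by (simp add: minus_div_mult_eq_mod[symmetric] algebra_simps)
  have x_eq: "x = g*\<beta> + r" unfolding r_def \<beta>_def by simp
  have "x - (s*D + r) = n * (\<beta>*(u + v) + q*(m - 2*a))"
    unfolding x_eq s_eq D_eq n_eq using uv by algebra
  then have "x mod n = (s*D + r) mod n" by (metis mod_eq_dvd_iff dvd_triv_left)
  moreover have "0 \<le> s" "s < m" "0 \<le> r" "r < g"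
    unfolding s_def r_def using two_a_less_m a_pos g_ge_3 by auto
  ultimately show ?thesis using that by blast
qed

definition R :: "int \<Rightarrow> int" where
  "R i = (if in_E i then -1 else 1)"

definition cn :: "int \<times> int \<Rightarrow> int \<times> int" where
  "cn = CN n (cyc_diag n k) R (\<lambda>_. 1)"

definition offset :: "int \<Rightarrow> int" where
  "offset p = (if p \<le> h then 2*p else 2*p - k)"

definition cell :: "int \<Rightarrow> int \<Rightarrow> int \<times> int" where
  "cell x p = (wrap n x, wrap n (x - offset p))"

lemma cn_wrap:
  "cn (wrap n u, wrap n v) =
    col_step n (cyc_diag n k) 1 (row_step n (cyc_diag n k) (R u) (wrap n u, wrap n v))"
  using in_E_cong[OF wrap_mod] by (simp add: cn_def CN_def R_def)

lemma offset_bounds: "0 \<le> p \<Longrightarrow> p \<le> 2*h \<Longrightarrow> 0 \<le> offset p \<and> offset p < k"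
  unfolding offset_def using k_eq by auto

lemma offset_mod: "0 \<le> p \<Longrightarrow> p \<le> 2*h \<Longrightarrow> (x - (x - offset p)) mod n = offset p"
  using offset_bounds[of p] k_less_n by simp

lemma cell_cong: "x mod n = y mod n \<Longrightarrow> cell x p = cell y p"
  unfolding cell_def by (metis mod_diff_left_eq wrap_cong)

lemma cell_in_F: "0 \<le> p \<Longrightarrow> p \<le> 2*h \<Longrightarrow> cell x p \<in> cyc_diag n k"
  unfolding cell_def using wrap_mem_cyc_diag_iff[OF n_pos] offset_mod offset_bounds by simp

lemma cell_surj:
  assumes "u \<in> cyc_diag n k"
  obtains x p where "0 \<le> p" "p \<le> 2*h" "u = cell x p"
proof -
  obtain i j where u: "u = (i, j)" "i \<in> {1..n}" "j \<in> {1..n}" and d: "0 \<le> (i - j) mod n" "(i - j) mod n < k"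
    using assms by (auto simp: cyc_diag_def)
  define p where "p = (if even ((i - j) mod n) then (i - j) mod n div 2 else ((i - j) mod n + k) div 2)"
  have p: "0 \<le> p" "p \<le> 2*h" "offset p = (i - j) mod n"
    using d k_eq unfolding p_def offset_def by (auto elim!: evenE oddE)
  have "(i - (i - j) mod n) mod n = j mod n"
    by (simp add: mod_diff_right_eq)
  then have "wrap n (i - (i - j) mod n) = j"
    using wrap_cong wrap_id[OF u(3)] by metis
  then have "u = cell i p"
    unfolding cell_def u(1) p(3) using wrap_id[OF u(2)] by simp
  then show ?thesis using that p by blast
qed

lemma cn_in_E:
  assumes "in_E x" "0 \<le> p" "p < 2*h"
  shows "cn (cell x p) = cell (x + 1) (p + 1)"
proof (cases "p = h")
  case True
  then have off: "offset p = k - 1" "offset (p + 1) = 1"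
    unfolding offset_def using k_eq g_le_h g_ge_3 by auto
  have "row_step n (cyc_diag n k) (-1) (cell x p) = (wrap n x, wrap n (x - offset p - (n - k + 1)))"
    unfolding cell_def
    by (rule row_step_left_jump)
      (use off offset_mod[of p] assms k_less_n k_eq g_le_h g_ge_3 in auto)
  also have "x - offset p - (n - k + 1) = x - n"
    using off by simp
  finally have "row_step n (cyc_diag n k) (-1) (cell x p) = (wrap n x, wrap n (x - n))" .
  moreover have "col_step n (cyc_diag n k) 1 (wrap n x, wrap n (x - n)) = (wrap n (x + 1), wrap n (x - n))"
    by (rule col_step_down) (use n_pos k_less_n k_eq g_le_h g_ge_3 in auto)
  moreover have "wrap n (x - n) = wrap n (x + 1 - offset (p + 1))"
    using off by (intro wrap_cong) simp
  ultimately show ?thesis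
    using assms(1) cn_wrap unfolding cell_def R_def by simp
next
  case False
  then have off: "offset p + 1 < k - 1" "offset (p + 1) = offset p + 2" "0 \<le> offset p"
    unfolding offset_def using assms(2,3) k_eq by auto
  have "row_step n (cyc_diag n k) (-1) (cell x p) = (wrap n x, wrap n (x - offset p - 1))"
    unfolding cell_def by (rule row_step_left) (use off offset_mod assms n_pos k_less_n in auto)
  moreover have "col_step n (cyc_diag n k) 1 (wrap n x, wrap n (x - offset p - 1)) =
      (wrap n (x + 1), wrap n (x - offset p - 1))"
    by (rule col_step_down) (use off n_pos k_less_n in auto)
  ultimately show ?thesis
    using assms(1) cn_wrap off unfolding cell_def R_def by (simp add: algebra_simps)
qed

lemma cn_in_E_last:
  assumes "in_E x"
  shows "cn (cell x (2*h)) = cell (x + D) 0"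
proof -
  have off: "offset (2*h) = k - 2" "offset 0 = 0"
    unfolding offset_def using k_eq g_le_h g_ge_3 by auto
  have "row_step n (cyc_diag n k) (-1) (cell x (2*h)) = (wrap n x, wrap n (x - (k - 2) - 1))"
    unfolding cell_def off by (rule row_step_left) (use n_pos k_less_n k_eq g_le_h g_ge_3 in auto)
  moreover have "col_step n (cyc_diag n k) 1 (wrap n x, wrap n (x - (k - 2) - 1)) =
      (wrap n (x + (n - k + 1)), wrap n (x - (k - 2) - 1))"
    by (rule col_step_down_jump) (use n_pos k_less_n k_eq g_le_h g_ge_3 in auto)
  moreover have "wrap n (x - (k - 2) - 1) = wrap n (x + D - offset 0)"
  proof (rule wrap_cong)
    have "x - (k - 2) - 1 = x - 2*h" using k_eq by simp
    then show "(x - (k - 2) - 1) mod n = (x + D - offset 0) mod n"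
      by (simp only: off(2) diff_zero mod_minus_2h)
  qed
  ultimately show ?thesis
    using assms cn_wrap jump_length_eq_D unfolding cell_def R_def by simp
qed

lemma cn_not_in_E:
  assumes "\<not> in_E x" "1 \<le> p" "p \<le> 2*h"
  shows "cn (cell x p) = cell (x + 1) p"
proof -
  have off: "1 \<le> offset p" "offset p < k"
    unfolding offset_def using assms(2,3) k_eq by auto
  have "row_step n (cyc_diag n k) 1 (cell x p) = (wrap n x, wrap n (x - offset p + 1))"
    unfolding cell_def by (rule row_step_right) (use off offset_mod assms n_pos in auto)
  moreover have "col_step n (cyc_diag n k) 1 (wrap n x, wrap n (x - offset p + 1)) =
      (wrap n (x + 1), wrap n (x - offset p + 1))"
    by (rule col_step_down) (use off n_pos k_less_n in auto)
  ultimately show ?thesis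
    using assms(1) cn_wrap unfolding cell_def R_def by (simp add: algebra_simps)
qed

lemma cn_not_in_E_zero:
  assumes "\<not> in_E x"
  shows "cn (cell x 0) = cell (x + D) 0"
proof -
  have off: "offset 0 = 0"
    unfolding offset_def using g_le_h g_ge_3 by auto
  have "row_step n (cyc_diag n k) 1 (cell x 0) = (wrap n x, wrap n (x + D))"
    unfolding cell_def off
    using row_step_right_jump[of x "x - 0" n k] k_less_n k_eq g_le_h g_ge_3 jump_length_eq_D
    by simp
  moreover have "(x - (x + D)) mod n = k - 1"
    using neg_mod_eq[of D n] g_le_D g_ge_3 n_eq_D_plus_2h k_eq g_le_h by simp
  then have "col_step n (cyc_diag n k) 1 (wrap n x, wrap n (x + D)) = (wrap n (x + D), wrap n (x + D))"
    using col_step_down_jump[of x "x + D" n k] k_less_n k_eq g_le_h g_ge_3 jump_length_eq_D by simp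
  ultimately show ?thesis
    using assms cn_wrap off unfolding cell_def R_def by simp
qed

lemma cn_cell_is_cell:
  assumes "0 \<le> p" "p \<le> 2*h"
  obtains y q where "0 \<le> q" "q \<le> 2*h" "cn (cell x p) = cell y q"
proof (cases "in_E x")
  case True
  show ?thesis
  proof (cases "p = 2*h")
    case True
    then show ?thesis using that[of 0] cn_in_E_last[OF \<open>in_E x\<close>] g_le_h g_ge_3 by simp
  next
    case False
    then show ?thesis using that[of "p + 1"] cn_in_E[OF \<open>in_E x\<close>] assms by simp
  qed
next
  case False
  show ?thesis
  proof (cases "p = 0")
    case True
    then show ?thesis
      using that[of 0] cn_not_in_E_zero[OF \<open>\<not> in_E x\<close>] g_le_h g_ge_3 by simp
  next
    case p_nonzero: False
    then show ?thesis using that[of p] cn_not_in_E[OF False] assms by simp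
  qed
qed

lemma cell_cn_preimage:
  assumes "0 \<le> p" "p \<le> 2*h"
  obtains y q where "0 \<le> q" "q \<le> 2*h" "cell x p = cn (cell y q)"
proof (cases "p = 0")
  case True
  show ?thesis
  proof (cases "in_E (x - D)")
    case True
    then show ?thesis
      using that[of "2*h" "x - D"] cn_in_E_last[of "x - D"] \<open>p = 0\<close> g_le_h g_ge_3
      by simp
  next
    case False
    then show ?thesis
      using that[of 0 "x - D"] cn_not_in_E_zero[of "x - D"] \<open>p = 0\<close> g_le_h g_ge_3
      by simp
  qed
next
  case False
  show ?thesis
  proof (cases "in_E (x - 1)")
    case True
    then show ?thesis
      using that[of "p - 1" "x - 1"] cn_in_E[of "x - 1" "p - 1"] False assms by simp
  next
    case not_in_E: False
    then show ?thesis
      using that[of p "x - 1"] cn_not_in_E[of "x - 1" p] False assms by simp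
  qed
qed

lemma cn_image: "cn ` cyc_diag n k = cyc_diag n k"
proof
  show "cn ` cyc_diag n k \<subseteq> cyc_diag n k"
  proof
    fix v assume "v \<in> cn ` cyc_diag n k"
    then obtain u where "u \<in> cyc_diag n k" "v = cn u" by blast
    then obtain x p where "0 \<le> p" "p \<le> 2*h" "v = cn (cell x p)" by (auto elim: cell_surj)
    then show "v \<in> cyc_diag n k" by (metis cell_in_F cn_cell_is_cell)
  qed
  show "cyc_diag n k \<subseteq> cn ` cyc_diag n k"
  proof
    fix v assume "v \<in> cyc_diag n k"
    then obtain x p where "0 \<le> p" "p \<le> 2*h" "v = cell x p" by (auto elim: cell_surj)
    then show "v \<in> cn ` cyc_diag n k" by (metis cell_in_F cell_cn_preimage image_eqI)
  qed
qed

lemma finite_F: "finite (cyc_diag n k)"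
proof (rule finite_subset)
  show "cyc_diag n k \<subseteq> {1..n} \<times> {1..n}" by (auto simp: cyc_diag_def)
qed simp

lemma bij_betw_cn: "bij_betw cn (cyc_diag n k) (cyc_diag n k)"
  using eq_card_imp_inj_on[OF finite_F, of cn] cn_image by (simp add: bij_betw_def)

section \<open>Connectivity of the orbit\<close>

definition linked :: "int \<times> int \<Rightarrow> int \<times> int \<Rightarrow> bool" (infix \<open>\<leadsto>\<close> 50) where
  "u \<leadsto> v \<longleftrightarrow> (\<exists>t. (cn ^^ t) (case_prod cell u) = case_prod cell v)"

lemma linked_refl [simp]: "u \<leadsto> u"
  unfolding linked_def by (metis funpow_0)

lemma linked_trans [trans]: "u \<leadsto> v \<Longrightarrow> v \<leadsto> w \<Longrightarrow> u \<leadsto> w"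
  unfolding linked_def by (metis funpow_add comp_apply)

lemma linked_cong: "x mod n = y mod n \<Longrightarrow> (x, p) \<leadsto> (y, p)"
  using cell_cong linked_refl unfolding linked_def by (metis case_prod_conv)

lemma linked_sym: "0 \<le> p \<Longrightarrow> p \<le> 2*h \<Longrightarrow> (x, p) \<leadsto> (y, q) \<Longrightarrow> (y, q) \<leadsto> (x, p)"
  unfolding linked_def using funpow_return_bij_betw[OF bij_betw_cn finite_F cell_in_F]
  by (metis case_prod_conv)

lemma linked_cn: "cn (cell x p) = cell y q \<Longrightarrow> (x, p) \<leadsto> (y, q)"
  unfolding linked_def by (metis case_prod_conv funpow_0 funpow_Suc_right comp_apply)

lemma linked_in_E: "in_E x \<Longrightarrow> 0 \<le> p \<Longrightarrow> p < 2*h \<Longrightarrow> (x, p) \<leadsto> (x + 1, p + 1)"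
  by (rule linked_cn) (rule cn_in_E)

lemma linked_in_E_last: "in_E x \<Longrightarrow> (x, 2*h) \<leadsto> (x + D, 0)"
  by (rule linked_cn) (rule cn_in_E_last)

lemma linked_not_in_E: "\<not> in_E x \<Longrightarrow> 1 \<le> p \<Longrightarrow> p \<le> 2*h \<Longrightarrow> (x, p) \<leadsto> (x + 1, p)"
  by (rule linked_cn) (rule cn_not_in_E)

lemma linked_not_in_E_zero: "\<not> in_E x \<Longrightarrow> (x, 0) \<leadsto> (x + D, 0)"
  by (rule linked_cn) (rule cn_not_in_E_zero)

lemma linked_walk_in_E:
  assumes "0 \<le> L" "\<And>j. 0 \<le> j \<Longrightarrow> j < L \<Longrightarrow> in_E (x + j)" "0 \<le> p" "p + L \<le> 2*h"
  shows "(x, p) \<leadsto> (x + L, p + L)"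
  using assms
proof (induction L rule: int_ge_induct)
  case (step L)
  then have "(x, p) \<leadsto> (x + L, p + L)" by simp
  also have "\<dots> \<leadsto> (x + L + 1, p + L + 1)"
    by (rule linked_in_E) (use step in auto)
  finally show ?case by (simp add: add.assoc)
qed simp

lemma linked_walk_not_in_E:
  assumes "0 \<le> L" "\<And>j. 0 \<le> j \<Longrightarrow> j < L \<Longrightarrow> \<not> in_E (x + j)" "1 \<le> p" "p \<le> 2*h"
  shows "(x, p) \<leadsto> (x + L, p)"
  using assms
proof (induction L rule: int_ge_induct)
  case (step L)
  then have "(x, p) \<leadsto> (x + L, p)" by simp
  also have "\<dots> \<leadsto> (x + L + 1, p)"
    by (rule linked_not_in_E) (use step in auto)
  finally show ?case by (simp add: add.assoc)
qed simp

lemma linked_walk_block: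
  assumes "0 \<le> s" "s < a" "0 \<le> r" "r \<le> r'" "r' \<le> g" "x = s*D + r" "y = s*D + r'"
    and "0 \<le> p" "q = p + (r' - r)" "q \<le> 2*h"
  shows "(x, p) \<leadsto> (y, q)"
  using linked_walk_in_E[of "r' - r" "s*D + r" p] in_E_block[of s] assms by (simp add: add.assoc)

lemma linked_walk_last_block:
  assumes "0 \<le> r" "r \<le> r'" "r' \<le> c" "x = a*D + r" "y = a*D + r'"
    and "0 \<le> p" "q = p + (r' - r)" "q \<le> 2*h"
  shows "(x, p) \<leadsto> (y, q)"
  using linked_walk_in_E[of "r' - r" "a*D + r" p] in_E_last_block assms by (simp add: add.assoc)

lemma linked_walk_gap:
  assumes "0 \<le> s" "s < a" "1 \<le> p" "p \<le> 2*h"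
  shows "(s*D + g, p) \<leadsto> ((s + 1)*D, p)"
proof -
  have "(s*D + g, p) \<leadsto> (s*D + g + (D - g), p)"
    by (rule linked_walk_not_in_E)
      (use assms g_le_D not_in_E_gap[of s] in \<open>auto simp: algebra_simps\<close>)
  then show ?thesis by (simp add: algebra_simps)
qed

lemma linked_walk_tail:
  assumes "1 \<le> p" "p \<le> 2*h"
  shows "(a*D + c, p) \<leadsto> (0, p)"
proof -
  have "(a*D + c, p) \<leadsto> (a*D + c + (n - a*D - c), p)"
    by (rule linked_walk_not_in_E) (use assms blocks_fit_period c_less_g not_in_E_tail in auto)
  also have "\<dots> \<leadsto> (0, p)"
    by (rule linked_cong) simp
  finally show ?thesis .
qed

lemma linked_walk_blocks:
  assumes "0 \<le> s" "s \<le> s'" "s' \<le> a" "x = s*D" "y = s'*D"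
    and "0 \<le> p" "q = p + (s' - s)*g" "q \<le> 2*h"
  shows "(x, p) \<leadsto> (y, q)"
  unfolding assms(4,5) using assms(2,3,6-)
proof (induction s' arbitrary: q rule: int_ge_induct)
  case (step s')
  have q: "q = p + (s' - s)*g + g"
    using step.prems by (simp add: algebra_simps)
  have nonneg: "0 \<le> p + (s' - s)*g"
    using step mult_g_mono[of 0 "s' - s"] by simp
  have "(s*D, p) \<leadsto> (s'*D, p + (s' - s)*g)"
    using step g_ge_3 by (intro step.IH) (auto simp: algebra_simps)
  also have "\<dots> \<leadsto> (s'*D + g, p + (s' - s)*g + g)"
    by (rule linked_walk_block[where s = s' and r = 0 and r' = g])
      (use step assms(1) nonneg q g_ge_3 in auto)
  also have "\<dots> \<leadsto> ((s' + 1)*D, p + (s' - s)*g + g)"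
    using linked_walk_gap[of s' "p + (s' - s)*g + g"] step assms(1) nonneg g_ge_3 q by simp
  finally show ?case unfolding q .
qed simp

lemma linked_walk_around:
  assumes "0 \<le> p" "q = p + c" "q \<le> 2*h"
  shows "(a*D, p) \<leadsto> (0, q)"
proof -
  have "(a*D, p) \<leadsto> (a*D + c, q)"
    by (rule linked_walk_last_block[where r = 0 and r' = c]) (use assms c_pos in auto)
  also have "\<dots> \<leadsto> (0, q)"
    by (rule linked_walk_tail) (use assms c_pos in auto)
  finally show ?thesis .
qed

lemma linked_climb_from_origin:
  assumes "1 \<le> s" "s \<le> a" "0 \<le> r" "r \<le> g - 2"
  shows "(0, 2*h - (s - 1)*g - r - 1) \<leadsto> (s*D + r + 1, 0)"
proof -
  have sg: "0 \<le> (s - 1)*g" "(s - 1)*g \<le> h - g"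
    using mult_g_mono[of 0 "s - 1"] mult_g_mono[of "s - 1" "a - 1"] assms h_eq
    by (auto simp: algebra_simps)
  have "(0, 2*h - (s - 1)*g - r - 1) \<leadsto> ((s - 1)*D, 2*h - r - 1)"
    by (rule linked_walk_blocks[where s = 0 and s' = "s - 1"]) (use assms sg g_le_h in auto)
  also have "\<dots> \<leadsto> ((s - 1)*D + (r + 1), 2*h)"
    by (rule linked_walk_block[where s = "s - 1" and r = 0 and r' = "r + 1"])
      (use assms g_le_h in auto)
  also have "\<dots> \<leadsto> ((s - 1)*D + (r + 1) + D, 0)"
    by (rule linked_in_E_last, rule in_E_block) (use assms in auto)
  also have "(s - 1)*D + (r + 1) + D = s*D + r + 1"
    by (simp add: algebra_simps)
  finally show ?thesis .
qed

lemma linked_residue_to_origin: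
  assumes "0 \<le> r" "r < g"
  shows "(r, 0) \<leadsto> (0, h - r + c)"
proof -
  have "(r, 0) \<leadsto> (g, g - r)"
    by (rule linked_walk_block[where s = 0 and r = r and r' = g]) (use assms a_pos g_le_h in auto)
  also have "\<dots> \<leadsto> (D, g - r)"
    using linked_walk_gap[of 0 "g - r"] assms a_pos g_le_h by simp
  also have "\<dots> \<leadsto> (a*D, h - r)"
    by (rule linked_walk_blocks[where s = 1 and s' = a])
      (use assms a_pos g_le_h h_eq in \<open>auto simp: algebra_simps\<close>)
  also have "\<dots> \<leadsto> (0, h - r + c)"
    by (rule linked_walk_around) (use assms g_eq g_le_h in auto)
  finally show ?thesis .
qed

text \<open>
  Level 0 is the main diagonal. Its cells are linked by detours through the higher levels: a
  walk once around the period rises by \<open>g\<close> on each full block of \<open>E'\<close> and by \<open>c\<close> on the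
  partial one, and the detours are arranged to reach the top level in the row from which the
  final jump of \<open>D\<close> lands on the intended diagonal cell.
\<close>

lemma diag_linked_block_succ:
  assumes "1 \<le> s" "s < a" "0 \<le> r" "r \<le> g - 2"
  shows "(s*D + r, 0) \<leadsto> (s*D + r + 1, 0)"
proof -
  obtain S where sg: "s*g = S" "g \<le> S" "S \<le> h - g"
    using mult_g_mono[of 1 s] mult_g_mono[of s "a - 1"] assms by (auto simp: h_eq algebra_simps)
  note facts = assms sg c_pos two_c g_le_h a_times_g
  have "(s*D + r, 0) \<leadsto> (s*D + g, g - r)"
    by (rule linked_walk_block[where s = s and r = r and r' = g]) (use facts in auto)
  also have "\<dots> \<leadsto> ((s + 1)*D, g - r)"
    by (rule linked_walk_gap) (use facts in auto)
  also have "\<dots> \<leadsto> (a*D, h - S - r)"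
    by (rule linked_walk_blocks[where s = "s + 1" and s' = a])
      (use facts in \<open>auto simp: algebra_simps\<close>)
  also have "\<dots> \<leadsto> (0, h - S - r + c)"
    by (rule linked_walk_around) (use facts in auto)
  also have "\<dots> \<leadsto> (s*D, h - r + c)"
    by (rule linked_walk_blocks[where s = 0 and s' = s])
      (use facts in \<open>auto simp: algebra_simps\<close>)
  also have "\<dots> \<leadsto> (a*D, 2*h - S - r + c)"
    by (rule linked_walk_blocks[where s = s and s' = a])
      (use facts in \<open>auto simp: algebra_simps\<close>)
  also have "\<dots> \<leadsto> (0, 2*h - (s - 1)*g - r - 1)"
    by (rule linked_walk_around) (use facts in \<open>auto simp: algebra_simps\<close>)
  also have "\<dots> \<leadsto> (s*D + r + 1, 0)"
    by (rule linked_climb_from_origin) (use assms in auto)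
  finally show ?thesis .
qed

lemma diag_linked_last_block_succ:
  assumes "0 \<le> r" "r < c"
  shows "(a*D + r, 0) \<leadsto> (a*D + r + 1, 0)"
proof -
  note facts = assms c_pos two_c g_le_h a_times_g a_pos
  have "(a*D + r, 0) \<leadsto> (a*D + c, c - r)"
    by (rule linked_walk_last_block[where r = r and r' = c]) (use facts in auto)
  also have "\<dots> \<leadsto> (0, c - r)"
    by (rule linked_walk_tail) (use facts in auto)
  also have "\<dots> \<leadsto> (a*D, c - r + h)"
    by (rule linked_walk_blocks[where s = 0 and s' = a])
      (use facts in \<open>auto simp: algebra_simps\<close>)
  also have "\<dots> \<leadsto> (0, 2*h - (a - 1)*g - r - 1)"
    by (rule linked_walk_around) (use facts in \<open>auto simp: algebra_simps\<close>)
  also have "\<dots> \<leadsto> (a*D + r + 1, 0)"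
    by (rule linked_climb_from_origin) (use facts in auto)
  finally show ?thesis .
qed

lemma diag_linked_block_end:
  assumes "0 \<le> s" "s < a"
  shows "(s*D + (g - 1), 0) \<leadsto> ((s + 1)*D, 0)"
proof -
  obtain S where sg: "s*g = S" "0 \<le> S" "S \<le> h - g"
    using mult_g_mono[of 0 s] mult_g_mono[of s "a - 1"] assms by (auto simp: h_eq algebra_simps)
  note facts = assms sg c_pos two_c g_le_h a_times_g
  have "(s*D + (g - 1), 0) \<leadsto> (s*D + g, 1)"
    by (rule linked_walk_block[where s = s and r = "g - 1" and r' = g]) (use facts in auto)
  also have "\<dots> \<leadsto> ((s + 1)*D, 1)"
    by (rule linked_walk_gap) (use facts in auto)
  also have "\<dots> \<leadsto> (a*D, 1 + h - S - g)"
    by (rule linked_walk_blocks[where s = "s + 1" and s' = a])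
      (use facts in \<open>auto simp: algebra_simps\<close>)
  also have "\<dots> \<leadsto> (0, 1 + h - S - g + c)"
    by (rule linked_walk_around) (use facts in auto)
  also have "\<dots> \<leadsto> (a*D, 1 + 2*h - S - g + c)"
    by (rule linked_walk_blocks[where s = 0 and s' = a])
      (use facts in \<open>auto simp: algebra_simps\<close>)
  also have "\<dots> \<leadsto> (0, 2*h - S)"
    by (rule linked_walk_around) (use facts in \<open>auto simp: algebra_simps\<close>)
  also have "\<dots> \<leadsto> (s*D, 2*h)"
    by (rule linked_walk_blocks[where s = 0 and s' = s])
      (use facts in \<open>auto simp: algebra_simps\<close>)
  also have "\<dots> \<leadsto> (s*D + D, 0)"
    using linked_in_E_last in_E_block[of s 0] facts by simp
  finally show ?thesis by (simp add: algebra_simps)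
qed

lemma diag_linked_low_residue:
  assumes "0 \<le> r" "r < c"
  shows "(r, 0) \<leadsto> (a*D + (c + 1 + r), 0)"
proof -
  note facts = assms c_pos two_c g_le_h a_times_g a_pos
  have "(r, 0) \<leadsto> (0, h - r + c)"
    by (rule linked_residue_to_origin) (use facts in auto)
  also have "\<dots> \<leadsto> ((a - 1)*D, 2*h - g - r + c)"
    by (rule linked_walk_blocks[where s = 0 and s' = "a - 1"])
      (use facts in \<open>auto simp: algebra_simps\<close>)
  also have "\<dots> \<leadsto> ((a - 1)*D + (c + 1 + r), 2*h)"
    by (rule linked_walk_block[where s = "a - 1" and r = 0 and r' = "c + 1 + r"])
      (use facts in auto)
  also have "\<dots> \<leadsto> ((a - 1)*D + (c + 1 + r) + D, 0)"
    by (rule linked_in_E_last, rule in_E_block) (use facts in auto)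
  finally show ?thesis by (simp add: algebra_simps)
qed

lemma diag_linked_high_residue:
  assumes "c \<le> r" "r < g - 1"
  shows "(r, 0) \<leadsto> ((a + 1)*D + (r - c), 0)"
proof -
  note facts = assms c_pos two_c g_le_h a_times_g a_pos
  have "(r, 0) \<leadsto> (0, h - r + c)"
    by (rule linked_residue_to_origin) (use facts in auto)
  also have "\<dots> \<leadsto> (a*D, 2*h - r + c)"
    by (rule linked_walk_blocks[where s = 0 and s' = a])
      (use facts in \<open>auto simp: algebra_simps\<close>)
  also have "\<dots> \<leadsto> (a*D + (r - c), 2*h)"
    by (rule linked_walk_last_block[where r = 0 and r' = "r - c"]) (use facts in auto)
  also have "\<dots> \<leadsto> (a*D + (r - c) + D, 0)"
    by (rule linked_in_E_last, rule in_E_last_block) (use facts in auto)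
  finally show ?thesis by (simp add: algebra_simps)
qed

lemma diag_linked_far_block:
  assumes "a < s" "s \<le> m" "0 \<le> r" "r < g"
  shows "(s*D + r, 0) \<leadsto> (r, 0)"
  using assms(2,1)
proof (induction s rule: int_le_induct)
  case base
  have "m*D = (m - 2*a)*n" unfolding D_eq n_eq by (simp add: algebra_simps)
  then show ?case by (intro linked_cong) simp
next
  case (step s)
  have "((s - 1)*D + r, 0) \<leadsto> ((s - 1)*D + r + D, 0)"
    by (rule linked_not_in_E_zero, rule not_in_E_far) (use step assms in auto)
  also have "(s - 1)*D + r + D = s*D + r"
    by (simp add: algebra_simps)
  also have "(s*D + r, 0) \<leadsto> (r, 0)"
    using step by simp
  finally show ?case .
qed

lemma diag_linked_last_block_tail:
  assumes "c \<le> r" "r < g"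
  shows "(a*D + r, 0) \<leadsto> (r, 0)"
proof -
  have "(a*D + r, 0) \<leadsto> (a*D + r + D, 0)"
    by (rule linked_not_in_E_zero, rule not_in_E_tail) (use assms blocks_fit_period in auto)
  also have "a*D + r + D = (a + 1)*D + r"
    by (simp add: algebra_simps)
  also have "((a + 1)*D + r, 0) \<leadsto> (r, 0)"
    by (rule diag_linked_far_block) (use assms two_a_less_m a_pos c_pos in auto)
  finally show ?thesis .
qed

lemma diag_linked_next_block:
  assumes "1 \<le> s" "s < a" "0 \<le> r" "r \<le> g - 1"
  shows "(s*D + r, 0) \<leadsto> ((s + 1)*D, 0)"
  using assms(4,3)
proof (induction r rule: int_le_induct)
  case base
  show ?case by (rule diag_linked_block_end) (use assms in auto)
next
  case (step r)
  have "(s*D + (r - 1), 0) \<leadsto> (s*D + (r - 1) + 1, 0)"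
    by (rule diag_linked_block_succ) (use assms step in auto)
  also have "(s*D + (r - 1) + 1, 0) \<leadsto> ((s + 1)*D, 0)"
    using step by simp
  finally show ?case .
qed

lemma diag_linked_blocks:
  assumes "1 \<le> s" "s \<le> a"
  shows "(s*D, 0) \<leadsto> (a*D, 0)"
  using assms(2,1)
proof (induction s rule: int_le_induct)
  case (step s)
  have "((s - 1)*D, 0) \<leadsto> (s*D, 0)"
    using diag_linked_next_block[of "s - 1" 0] step g_ge_3 by simp
  also have "(s*D, 0) \<leadsto> (a*D, 0)"
    using step by simp
  finally show ?case .
qed simp

lemma diag_linked_last_block:
  assumes "0 \<le> r" "r \<le> c"
  shows "(a*D + r, 0) \<leadsto> (a*D + c, 0)"
  using assms(2,1)
proof (induction r rule: int_le_induct)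
  case (step r)
  have "(a*D + (r - 1), 0) \<leadsto> (a*D + r, 0)"
    using diag_linked_last_block_succ[of "r - 1"] step by simp
  also have "(a*D + r, 0) \<leadsto> (a*D + c, 0)"
    using step by simp
  finally show ?case .
qed simp

lemma diag_linked_residue_shift:
  assumes "0 \<le> r" "r < g"
  shows "(r, 0) \<leadsto> ((r + c + 1) mod g, 0)"
proof -
  consider "r < c" | "c \<le> r" "r < g - 1" | "r = g - 1" using assms by linarith
  then show ?thesis
  proof cases
    case 1
    have "(r, 0) \<leadsto> (a*D + (c + 1 + r), 0)"
      by (rule diag_linked_low_residue) (use 1 assms in auto)
    also have "\<dots> \<leadsto> (c + 1 + r, 0)"
      by (rule diag_linked_last_block_tail) (use 1 assms g_eq in auto)
    also have "c + 1 + r = (r + c + 1) mod g"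
      using 1 assms g_eq by simp
    finally show ?thesis .
  next
    case 2
    have "(r, 0) \<leadsto> ((a + 1)*D + (r - c), 0)"
      by (rule diag_linked_high_residue) (use 2 in auto)
    also have "\<dots> \<leadsto> (r - c, 0)"
      by (rule diag_linked_far_block) (use 2 two_a_less_m a_pos c_pos in auto)
    also have "r - c = (r + c + 1) mod g"
    proof -
      have e: "r + c + 1 = (r - c) + g" using g_eq by simp
      show ?thesis unfolding e using 2 c_pos by simp
    qed
    finally show ?thesis .
  next
    case 3
    have "(0*D + (g - 1), 0) \<leadsto> ((0 + 1)*D, 0)"
      by (rule diag_linked_block_end) (use a_pos in auto)
    then have "(r, 0) \<leadsto> (D, 0)"
      using 3 by simp
    also have "\<dots> \<leadsto> (a*D, 0)"
      using diag_linked_blocks[of 1] a_pos by simp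
    also have "\<dots> \<leadsto> (a*D + c, 0)"
      using diag_linked_last_block[of 0] c_pos by simp
    also have "\<dots> \<leadsto> (c, 0)"
      by (rule diag_linked_last_block_tail) (use c_less_g in auto)
    also have "(c, 0) = ((r + c + 1) mod g, 0)"
    proof -
      have e: "r + c + 1 = c + g" using 3 by simp
      show ?thesis unfolding e using c_pos c_less_g by simp
    qed
    finally show ?thesis .
  qed
qed

lemma diag_linked_residue_succ:
  assumes "0 \<le> r" "r < g - 1"
  shows "(r, 0) \<leadsto> (r + 1, 0)"
proof -
  define r' where "r' = (r + c + 1) mod g"
  have "(r, 0) \<leadsto> (r', 0)"
    unfolding r'_def by (rule diag_linked_residue_shift) (use assms in auto)
  also have "\<dots> \<leadsto> ((r' + c + 1) mod g, 0)"
    by (rule diag_linked_residue_shift) (use g_ge_3 in \<open>auto simp: r'_def\<close>)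
  also have "(r' + c + 1) mod g = (r + c + 1 + (c + 1)) mod g"
    unfolding r'_def by (simp add: mod_add_left_eq add.assoc)
  also have "\<dots> = (r + 1 + g) mod g"
    using g_eq by (simp add: algebra_simps)
  also have "\<dots> = r + 1"
    using assms by simp
  finally show ?thesis .
qed

lemma diag_linked_residues: "0 \<le> r \<Longrightarrow> r < g \<Longrightarrow> (0, 0) \<leadsto> (r, 0)"
proof (induction r rule: int_ge_induct)
  case (step r)
  then have "(0, 0) \<leadsto> (r, 0)" by simp
  also have "\<dots> \<leadsto> (r + 1, 0)"
    by (rule diag_linked_residue_succ) (use step in auto)
  finally show ?case .
qed simp

lemma diag_linked_residue_origin: "0 \<le> r \<Longrightarrow> r < g \<Longrightarrow> (r, 0) \<leadsto> (0, 0)"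
  using linked_sym[of 0] diag_linked_residues g_le_h g_ge_3 by simp

lemma diag_linked_last_block_origin:
  assumes "0 \<le> r" "r < g"
  shows "(a*D + r, 0) \<leadsto> (0, 0)"
proof (cases "r \<le> c")
  case True
  have "(a*D + r, 0) \<leadsto> (a*D + c, 0)"
    by (rule diag_linked_last_block) (use assms True in auto)
  also have "\<dots> \<leadsto> (c, 0)"
    by (rule diag_linked_last_block_tail) (use c_less_g in auto)
  also have "\<dots> \<leadsto> (0, 0)"
    by (rule diag_linked_residue_origin) (use c_pos c_less_g in auto)
  finally show ?thesis .
next
  case False
  have "(a*D + r, 0) \<leadsto> (r, 0)"
    by (rule diag_linked_last_block_tail) (use assms False in auto)
  also have "\<dots> \<leadsto> (0, 0)"
    by (rule diag_linked_residue_origin) (use assms in auto)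
  finally show ?thesis .
qed

lemma diag_linked_origin: "(x, 0) \<leadsto> (0, 0)"
proof -
  obtain s r where sr: "0 \<le> s" "s < m" "0 \<le> r" "r < g" "x mod n = (s*D + r) mod n"
    by (rule residue_decomposition)
  have "(x, 0) \<leadsto> (s*D + r, 0)"
    using sr(5) by (rule linked_cong)
  also have "\<dots> \<leadsto> (0, 0)"
  proof -
    consider "s = 0" | "1 \<le> s" "s < a" | "s = a" | "a < s" using sr by linarith
    then show ?thesis
    proof cases
      case 1
      then show ?thesis using diag_linked_residue_origin sr by simp
    next
      case 2
      have "(s*D + r, 0) \<leadsto> ((s + 1)*D, 0)"
        by (rule diag_linked_next_block) (use 2 sr in auto)
      also have "\<dots> \<leadsto> (a*D, 0)"
        by (rule diag_linked_blocks) (use 2 in auto)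
      also have "\<dots> \<leadsto> (0, 0)"
        using diag_linked_last_block_origin[of 0] g_ge_3 by simp
      finally show ?thesis .
    next
      case 3
      then show ?thesis using diag_linked_last_block_origin sr by simp
    next
      case 4
      have "(s*D + r, 0) \<leadsto> (r, 0)"
        by (rule diag_linked_far_block) (use 4 sr in auto)
      also have "\<dots> \<leadsto> (0, 0)"
        by (rule diag_linked_residue_origin) (use sr in auto)
      finally show ?thesis .
    qed
  qed
  finally show ?thesis .
qed

lemma origin_linked_diag: "(0, 0) \<leadsto> (x, 0)"
  using linked_sym[of 0] diag_linked_origin g_le_h g_ge_3 by simp

lemma linked_block_start_to_diag:
  assumes "0 \<le> s" "s \<le> a" "0 \<le> p" "p \<le> 2*h"
  shows "\<exists>y. (s*D, p) \<leadsto> (y, 0)"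
  using assms
proof (induction "nat (2*h - p)" arbitrary: s p rule: less_induct)
  case less
  consider "p = 0" | "0 < p" "s < a" "p + g \<le> 2*h" | "s < a" "2*h < p + g"
    | "0 < p" "s = a" "p + c \<le> 2*h" | "s = a" "2*h < p + c"
    using less.prems by linarith
  then show ?case
  proof cases
    case 1
    then show ?thesis using linked_refl by blast
  next
    case 2
    have "(s*D, p) \<leadsto> ((s + 1)*D, p + g)"
      by (rule linked_walk_blocks[where s = s and s' = "s + 1"]) (use less.prems 2 in auto)
    moreover obtain y where "((s + 1)*D, p + g) \<leadsto> (y, 0)"
      using less.hyps[of "p + g" "s + 1"] less.prems 2 g_ge_3 by auto
    ultimately show ?thesis by (blast intro: linked_trans)
  next
    case 3
    have "(s*D, p) \<leadsto> (s*D + (2*h - p), 2*h)"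
      by (rule linked_walk_block[where s = s and r = 0 and r' = "2*h - p"])
        (use less.prems 3 in auto)
    also have "\<dots> \<leadsto> (s*D + (2*h - p) + D, 0)"
      by (rule linked_in_E_last, rule in_E_block) (use less.prems 3 in auto)
    finally show ?thesis by blast
  next
    case 4
    have "(s*D, p) \<leadsto> (0*D, p + c)"
      using linked_walk_around[of p "p + c"] less.prems 4 by simp
    moreover obtain y where "(0*D, p + c) \<leadsto> (y, 0)"
      using less.hyps[of "p + c" 0] less.prems 4 c_pos a_pos by auto
    ultimately show ?thesis by (blast intro: linked_trans)
  next
    case 5
    have "(s*D, p) \<leadsto> (a*D + (2*h - p), 2*h)"
      by (rule linked_walk_last_block[where r = 0 and r' = "2*h - p"]) (use less.prems 5 in auto)
    also have "\<dots> \<leadsto> (a*D + (2*h - p) + D, 0)"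
      by (rule linked_in_E_last, rule in_E_last_block) (use less.prems 5 in auto)
    finally show ?thesis by blast
  qed
qed

lemma origin_linked_block_start:
  assumes "0 \<le> s" "s \<le> a" "0 \<le> p" "p \<le> 2*h"
  shows "(0, 0) \<leadsto> (s*D, p)"
proof -
  obtain y where "(s*D, p) \<leadsto> (y, 0)"
    using linked_block_start_to_diag[OF assms] by blast
  then have "(y, 0) \<leadsto> (s*D, p)"
    using linked_sym assms by blast
  with origin_linked_diag show ?thesis by (rule linked_trans)
qed

lemma origin_linked_block_cell:
  assumes "0 \<le> s" "s < a" "0 \<le> r" "r < D" "0 \<le> p" "p \<le> 2*h"
  shows "(0, 0) \<leadsto> (s*D + r, p)"
proof (cases "r < g")
  case True
  show ?thesis
  proof (cases "r \<le> p")
    case True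
    have "(0, 0) \<leadsto> (s*D, p - r)"
      by (rule origin_linked_block_start) (use assms True in auto)
    also have "\<dots> \<leadsto> (s*D + r, p)"
      by (rule linked_walk_block[where s = s and r = 0 and r' = r])
        (use assms True \<open>r < g\<close> in auto)
    finally show ?thesis .
  next
    case False
    have "(0, 0) \<leadsto> (s*D + (r - p), 0)"
      by (rule origin_linked_diag)
    also have "\<dots> \<leadsto> (s*D + r, p)"
      by (rule linked_walk_block[where s = s and r = "r - p" and r' = r])
        (use assms False \<open>r < g\<close> in auto)
    finally show ?thesis .
  qed
next
  case False
  show ?thesis
  proof (cases "p = 0")
    case True
    then show ?thesis using origin_linked_diag by simp
  next
    case p_pos: False
    have "(s*D + r, p) \<leadsto> (s*D + r + (D - r), p)"
      by (rule linked_walk_not_in_E)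
        (use assms p_pos False not_in_E_gap[of s] in \<open>auto simp: algebra_simps\<close>)
    then have "((s + 1)*D, p) \<leadsto> (s*D + r, p)"
      using linked_sym assms by (simp add: algebra_simps)
    moreover have "(0, 0) \<leadsto> ((s + 1)*D, p)"
      by (rule origin_linked_block_start) (use assms in auto)
    ultimately show ?thesis
      using linked_trans by blast
  qed
qed

lemma origin_linked_last_block_cell:
  assumes "0 \<le> r" "a*D + r < n" "0 \<le> p" "p \<le> 2*h"
  shows "(0, 0) \<leadsto> (a*D + r, p)"
proof (cases "r < c")
  case True
  show ?thesis
  proof (cases "r \<le> p")
    case True
    have "(0, 0) \<leadsto> (a*D, p - r)"
      by (rule origin_linked_block_start) (use assms True a_pos in auto)
    also have "\<dots> \<leadsto> (a*D + r, p)"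
      by (rule linked_walk_last_block[where r = 0 and r' = r])
        (use assms True \<open>r < c\<close> in auto)
    finally show ?thesis .
  next
    case False
    have "(0, 0) \<leadsto> (a*D + (r - p), 0)"
      by (rule origin_linked_diag)
    also have "\<dots> \<leadsto> (a*D + r, p)"
      by (rule linked_walk_last_block[where r = "r - p" and r' = r])
        (use assms False \<open>r < c\<close> in auto)
    finally show ?thesis .
  qed
next
  case False
  show ?thesis
  proof (cases "p = 0")
    case True
    then show ?thesis using origin_linked_diag by simp
  next
    case p_pos: False
    have "(a*D + r, p) \<leadsto> (a*D + r + (n - (a*D + r)), p)"
      by (rule linked_walk_not_in_E) (use assms p_pos False not_in_E_tail in auto)
    also have "\<dots> \<leadsto> (0*D, p)"
      by (rule linked_cong) simp
    finally have "(0*D, p) \<leadsto> (a*D + r, p)"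
      using linked_sym assms by blast
    moreover have "(0, 0) \<leadsto> (0*D, p)"
      by (rule origin_linked_block_start) (use assms a_pos in auto)
    ultimately show ?thesis
      using linked_trans by blast
  qed
qed

lemma origin_linked_cell:
  assumes "0 \<le> p" "p \<le> 2*h"
  shows "(0, 0) \<leadsto> (x, p)"
proof -
  define x' where "x' = x mod n"
  have x': "0 \<le> x'" "x' < n" unfolding x'_def using n_pos by auto
  have "(0, 0) \<leadsto> (x', p)"
  proof (cases "x' < a*D")
    case True
    define s r where "s = x' div D" and "r = x' mod D"
    have D_pos: "0 < D" using g_le_D g_ge_3 by simp
    have sr: "x' = s*D + r" "0 \<le> s" "0 \<le> r" "r < D"
      unfolding s_def r_def using x' D_pos by (auto simp: pos_imp_zdiv_nonneg_iff)
    moreover have "s < a"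
    proof (rule ccontr)
      assume "\<not> s < a"
      then have "a*D \<le> s*D" by (intro mult_D_mono) simp
      then show False using sr True by linarith
    qed
    ultimately show ?thesis
      using origin_linked_block_cell assms by simp
  next
    case False
    then show ?thesis
      using origin_linked_last_block_cell[of "x' - a*D" p] assms x' by simp
  qed
  also have "(x', p) \<leadsto> (x, p)"
    by (rule linked_cong) (simp add: x'_def)
  finally show ?thesis .
qed

theorem is_solution_construction: "is_solution n (cyc_diag n k) R (\<lambda>_. 1)"
proof -
  have "\<exists>t. (cn ^^ t) (cell 0 0) = u" if "u \<in> cyc_diag n k" for u
    using that origin_linked_cell by (auto simp: linked_def elim!: cell_surj)
  then have "{(cn ^^ t) (cell 0 0) | t. t < card (cyc_diag n k)} = cyc_diag n k"
    using single_cycle_bij_betw[OF bij_betw_cn finite_F cell_in_F[of 0 0]] g_le_h g_ge_3 by simp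
  then show ?thesis
    unfolding is_solution_def using bij_betw_cn cell_in_F[of 0 0] g_le_h g_ge_3
    by (auto simp: R_def cn_def)
qed

end

lemma has_solution_cyc_diag:
  fixes n k g m l :: int
  assumes "odd n" "odd k" "1 < k" "k < n" "1 < g" "g = gcd n (k - 1)"
    and "n = g*m" "k - 1 = g*l" "l div 2 * (m - l) < m"
  shows "has_solution n (cyc_diag n k)"
proof -
  have "odd g" using assms(1,7) by auto
  then obtain c where c: "g = 2*c + 1" by (rule oddE)
  then have "1 \<le> c" using assms(5) by simp
  have "0 < g*l" using assms(3,8) by simp
  then have "0 < l" using assms(5) by (simp add: zero_less_mult_iff)
  moreover have "even (g*l)" using assms(2) by (simp add: assms(8)[symmetric])
  then have "even l" using \<open>odd g\<close> by simp
  ultimately obtain a where a: "l = 2*a" "1 \<le> a" by (auto elim!: evenE)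
  have "g*(2*a) < g*m" using assms(4,7,8) a(1) by simp
  then have "2*a < m" using assms(5) by (simp add: mult_less_cancel_left)
  have "gcd (g*m) (g*l) = g"
    unfolding assms(7,8)[symmetric] using assms(6) by simp
  then have "g * gcd m l = g" using assms(5) by (simp add: gcd_mult_left)
  then have "coprime m (2*a)" using assms(5) a(1) by (simp add: coprime_iff_gcd_eq_1)
  have "k = 2*(a*g) + 1" using assms(8) a(1) by (simp add: algebra_simps)
  moreover have "a*(m - 2*a) + 1 \<le> m" using assms(9) a(1) by simp
  ultimately interpret cyc_diag_construction n k g c a m "a*g" "(m - 2*a)*g"
    using c \<open>1 \<le> c\<close> a \<open>2*a < m\<close> \<open>coprime m (2*a)\<close> assms(7) by unfold_locales simp_all
  show ?thesis unfolding has_solution_def using is_solution_construction by blast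
qed

theorem proposition5p4:
  fixes n k :: int and F :: "(int \<times> int) set"
  assumes "odd n" and "odd k" and "3 \<le> k" and "k < n"
    and "F = cyc_diag n k"
    and "\<exists>E \<subseteq> {1..n}. int (card E) = (k - 1) div 2 + (gcd n (k - 1) - 1) div 2 \<and>
           (\<exists>i \<in> {1..(k - 1) div gcd n (k - 1) - 1}. \<exists>js :: int \<Rightarrow> int.
              (\<forall>s \<in> {1..i+1}. js s \<in> {1..n div gcd n (k - 1)}) \<and>
              (\<forall>s \<in> {1..i}. js s < js (s + 1)) \<and>
              (\<forall>s \<in> {1..i}. (js (s + 1) - js s) mod (n div gcd n (k - 1)) =
                                 (- ((k - 1) div gcd n (k - 1))) mod (n div gcd n (k - 1))) \<and>
              (\<exists>f \<in> {1..gcd n (k - 1) - 1}.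
                 E = (\<Union>s \<in> {1..i+1}. {1 + (js s - 1) * gcd n (k - 1) .. js s * gcd n (k - 1)})
                     - {js (i + 1) * gcd n (k - 1) - f + 1 .. js (i + 1) * gcd n (k - 1)}))"
  shows "has_solution n F"
proof -
  define g m l where "g = gcd n (k - 1)" and "m = n div g" and "l = (k - 1) div g"
  obtain E i js f where card_E: "int (card E) = (k - 1) div 2 + (g - 1) div 2"
    and i: "i \<in> {1..l - 1}" and js: "\<forall>s \<in> {1..i+1}. js s \<in> {1..m}" "\<forall>s \<in> {1..i}. js s < js (s + 1)"
      "\<forall>s \<in> {1..i}. (js (s + 1) - js s) mod m = (- l) mod m"
    and f: "f \<in> {1..g - 1}"
    and E: "E = (\<Union>s \<in> {1..i+1}. {1 + (js s - 1) * g .. js s * g}) - {js (i + 1) * g - f + 1 .. js (i + 1) * g}"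
    using assms(6) unfolding g_def[symmetric] m_def[symmetric] l_def[symmetric]
    by (elim exE bexE conjE) (rule that; assumption)
  have i: "1 \<le> i" and f: "1 \<le> f" "f \<le> g - 1"
    using i f by simp_all
  have nm: "n = g*m" "k - 1 = g*l"
    unfolding g_def m_def l_def by simp_all
  have "0 < g*l" "g*l < g*m" "0 < g"
    using assms(3,4) f nm by linarith+
  then have l: "0 < l" "l < m"
    by (simp_all add: zero_less_mult_iff mult_less_cancel_left)
  have "l div 2 \<le> i"
    using div2_le_of_mult_bound[of g f "(g - 1) div 2" l i] card_blocks_minus_tail[of f g "i + 1" js]
      card_E E f i nm(2) \<open>0 < g\<close> by simp
  then have "l div 2 * (m - l) < m"
    using progression_mod_span[OF js l] l by (simp add: pos_imp_zdiv_nonneg_iff)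
  moreover have "1 < k" "1 < g"
    using assms(3) f by simp_all
  ultimately show ?thesis
    unfolding assms(5) using has_solution_cyc_diag[OF assms(1,2) _ assms(4) _ g_def nm] by blast
qed

end
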